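(* Let $x=(x_1^\top,\dots,x_m^\top)^\top\in\mathbb R^d$ with $x_i\in\mathbb R^{\bar d}$, and set $x_0=x_{m+1}=0\in\mathbb R^{\bar d}$. Then: (a) writing $\hat x=A^\top Ax=(\hat x_1^\top,\dots,\hat x_m^\top)^\top$ with $\hat x_i\in\mathbb R^{\bar d}$, we have $\mathrm{supp}(\hat x_i)\subset\mathrm{supp}(x_{i-1})\cup\mathrm{supp}(x_i)\cup\mathrm{supp}(x_{i+1})$ for all $i\in[1,m]$; (b) for any $\eta>0$, writing $\tilde x=\mathrm{prox}_{\eta g}(x)=(\tilde x_1^\top,\dots,\tilde x_m^\top)^\top$ with $\tilde x_i\in\mathbb R^{\bar d}$, we have $\mathrm{supp}(\tilde x_i)\subset\mathrm{supp}(x_{i-1})\cup\mathrm{supp}(x_i)\cup\mathrm{supp}(x_{i+1})$ for all $i\in[1,m]$.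
   Context: $\mathrm{supp}(z)=\{j:[z]_j\ne0\}$. Let $L_f>0$, $\beta>0$, integers $m_1\ge2$, $m_2\ge1$ with $m_1m_2$ even, $m=3m_1m_2$, $\bar d\ge5$ odd, $d=m\bar d$. $J_p\in\mathbb R^{(p-1)\times p}$ has $-1$ at $(k,k)$, $1$ at $(k,k+1)$, zero elsewhere. $\mathcal M=\{im_1:i=1,\dots,3m_2-1\}$, $\mathcal M^C=\{1,\dots,m-1\}\setminus\mathcal M$, $A=mL_f(J_{\mathcal M^C}\otimes I_{\bar d})$ with $J_{\mathcal M^C}$ the rows of $J_m$ indexed by $\mathcal M^C$. $g(x)=\beta\sum_{i\in\mathcal M}\|x_i-x_{i+1}\|_1$ and $\mathrm{prox}_{\eta g}(x)=\arg\min_{x'}\{g(x')+\frac1{2\eta}\|x'-x\|^2\}$. (In the paper $\beta$ additionally satisfies $\beta>(50\pi+1+\|A\|)\sqrt m\,\epsilon$ for a fixed $\epsilon\in(0,1)$.) *)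

theory Defs
  imports Complex_Main
begin

text \<open>Block representation of vectors in R^d, d = m * dbar:
  x i j is coordinate j (1..dbar) of block x_i (i in 1..m); x vanishes outside
  this index range, so in particular x_0 = x_(m+1) = 0.\<close>

definition blockvec :: "nat \<Rightarrow> nat \<Rightarrow> (nat \<Rightarrow> nat \<Rightarrow> real) set" where
  "blockvec m dbar = {x. \<forall>i j. (i \<notin> {1..m} \<or> j \<notin> {1..dbar}) \<longrightarrow> x i j = 0}"

definition supp :: "(nat \<Rightarrow> real) \<Rightarrow> nat set" where
  "supp v = {j. v j \<noteq> 0}"

definition Jmat :: "nat \<Rightarrow> nat \<Rightarrow> nat \<Rightarrow> real" where
  "Jmat p k l = (if k \<in> {1..p-1} \<and> l \<in> {1..p} then
                   (if l = k then -1 else if l = k + 1 then 1 else 0) else 0)"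

definition Mset :: "nat \<Rightarrow> nat \<Rightarrow> nat set" where
  "Mset m1 m2 = {i * m1 | i. 1 \<le> i \<and> i \<le> 3 * m2 - 1}"

definition McSet :: "nat \<Rightarrow> nat \<Rightarrow> nat \<Rightarrow> nat set" where
  "McSet m m1 m2 = {1..m-1} - Mset m1 m2"

text \<open>Entries of A = m L_f (J_{M^C} \<otimes> I_dbar). Rows are indexed by pairs (r, j')
  with r \<in> M^C (the row of J_m kept) and j' \<in> {1..dbar}; columns by pairs (c, j)
  with c \<in> {1..m}, j \<in> {1..dbar}.\<close>
definition Aent :: "real \<Rightarrow> nat \<Rightarrow> nat \<Rightarrow> nat \<times> nat \<Rightarrow> nat \<times> nat \<Rightarrow> real" where
  "Aent Lf m dbar rw cl = real m * Lf * Jmat m (fst rw) (fst cl) *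
     (if snd rw = snd cl then 1 else 0)"

definition Aop :: "real \<Rightarrow> nat \<Rightarrow> nat \<Rightarrow> (nat \<Rightarrow> nat \<Rightarrow> real) \<Rightarrow> nat \<Rightarrow> nat \<Rightarrow> real" where
  "Aop Lf m dbar x r j' =
     (\<Sum>c\<in>{1..m}. \<Sum>j\<in>{1..dbar}. Aent Lf m dbar (r, j') (c, j) * x c j)"

definition AtA :: "real \<Rightarrow> nat \<Rightarrow> nat \<Rightarrow> nat \<Rightarrow> nat \<Rightarrow> (nat \<Rightarrow> nat \<Rightarrow> real) \<Rightarrow> nat \<Rightarrow> nat \<Rightarrow> real" where
  "AtA Lf m m1 m2 dbar x c j =
     (\<Sum>r\<in>McSet m m1 m2. \<Sum>j'\<in>{1..dbar}. Aent Lf m dbar (r, j') (c, j) * Aop Lf m dbar x r j')"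

definition gfun :: "real \<Rightarrow> nat \<Rightarrow> nat \<Rightarrow> nat \<Rightarrow> (nat \<Rightarrow> nat \<Rightarrow> real) \<Rightarrow> real" where
  "gfun \<beta> m1 m2 dbar x = \<beta> * (\<Sum>i\<in>Mset m1 m2. \<Sum>j\<in>{1..dbar}. \<bar>x i j - x (i + 1) j\<bar>)"

definition sqdist :: "nat \<Rightarrow> nat \<Rightarrow> (nat \<Rightarrow> nat \<Rightarrow> real) \<Rightarrow> (nat \<Rightarrow> nat \<Rightarrow> real) \<Rightarrow> real" where
  "sqdist m dbar x y = (\<Sum>i\<in>{1..m}. \<Sum>j\<in>{1..dbar}. (x i j - y i j)\<^sup>2)"

definition prox :: "real \<Rightarrow> real \<Rightarrow> nat \<Rightarrow> nat \<Rightarrow> nat \<Rightarrow> nat \<Rightarrow> (nat \<Rightarrow> nat \<Rightarrow> real) \<Rightarrow> (nat \<Rightarrow> nat \<Rightarrow> real)" where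
  "prox \<eta> \<beta> m m1 m2 dbar x =
     (ARG_MIN (\<lambda>x'. gfun \<beta> m1 m2 dbar x' + 1 / (2 * \<eta>) * sqdist m dbar x' x) x'. x' \<in> blockvec m dbar)"

end

theory Submission
  imports Defs
begin

text \<open>The operator \<open>A\<close> only takes differences of
  coordinate \<open>j\<close> of neighbouring blocks, so block \<open>i\<close> of \<open>A\<^sup>T A x\<close> only sees
  \<open>x\<^sub>i\<^sub>-\<^sub>1, x\<^sub>i, x\<^sub>i\<^sub>+\<^sub>1\<close>.

  For the proximal map, \<open>g\<close> couples only the pairs \<open>(i, i + 1)\<close>, \<open>i \<in> M\<close>, and these are
  disjoint since \<open>m\<^sub>1 \<ge> 2\<close>. So the prox acts pairwise and has a closed form \<open>s\<close>: the two
  blocks of a pair are pulled together by \<open>clip (\<eta> \<beta>) ((x\<^sub>i - x\<^sub>i\<^sub>+\<^sub>1) / 2)\<close> coordinatewise, every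
  other block stays fixed. Then \<open>(x - s) / \<eta>\<close> is a subgradient of \<open>g\<close> at \<open>s\<close>, and with the
  three-point identity for squared distances this gives
  \<open>F s + \<parallel>y - s\<parallel>\<^sup>2 / (2 \<eta>) \<le> F y\<close> for the prox objective \<open>F\<close>, so \<open>s\<close> is its unique minimiser.\<close>

lemma Mset_pairs_subset:
  assumes "m1 \<ge> 1" and "m = 3 * m1 * m2"
  shows "Mset m1 m2 \<union> Suc ` Mset m1 m2 \<subseteq> {1..m}"
proof -
  have "1 \<le> i * m1 \<and> Suc (i * m1) \<le> m" if "1 \<le> i" "i \<le> 3 * m2 - 1" for i
  proof -
    have "(i + 1) * m1 \<le> (3 * m2) * m1"
      using that by (intro mult_le_mono1) linarith
    then show ?thesis
      using that assms by (simp add: algebra_simps)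
  qed
  then show ?thesis
    unfolding Mset_def by fastforce
qed

lemma Mset_Suc_disjoint:
  assumes "m1 \<ge> 2"
  shows "Mset m1 m2 \<inter> Suc ` Mset m1 m2 = {}"
proof -
  have "Suc (i * m1) \<noteq> k * m1" for i k
  proof
    assume "Suc (i * m1) = k * m1"
    then have "m1 dvd Suc (i * m1) - i * m1"
      by simp
    with assms show False by simp
  qed
  then show ?thesis
    unfolding Mset_def by auto
qed

lemma sum_Suc_pairs:
  fixes E :: "nat \<Rightarrow> 'a::comm_monoid_add"
  assumes "finite A" and "S \<union> Suc ` S \<subseteq> A" and "S \<inter> Suc ` S = {}"
    and "\<And>k. k \<in> A - (S \<union> Suc ` S) \<Longrightarrow> E k = 0"
  shows "sum E A = (\<Sum>i\<in>S. E i + E (Suc i))"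
proof -
  have fin: "finite S"
    using assms(1,2) finite_subset by auto
  have "sum E A = sum E (S \<union> Suc ` S)"
    using assms by (intro sum.mono_neutral_right) auto
  also have "\<dots> = sum E S + sum E (Suc ` S)"
    using fin assms(3) by (simp add: sum.union_disjoint)
  also have "\<dots> = (\<Sum>i\<in>S. E i + E (Suc i))"
    by (simp add: sum.reindex sum.distrib)
  finally show ?thesis .
qed

definition clip :: "real \<Rightarrow> real \<Rightarrow> real" where
  "clip c t = max (- c) (min c t)"

lemma clip_0: "c \<ge> 0 \<Longrightarrow> clip c 0 = 0"
  unfolding clip_def by simp

text \<open>With \<open>p = clip c (t/2)\<close>, the number \<open>p\<close> is a subgradient of \<open>c |.|\<close> at \<open>t - 2 p\<close>.\<close>

lemma abs_subgradient_clip: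
  fixes c t z :: real
  assumes "c \<ge> 0"
  defines "p \<equiv> clip c (t / 2)"
  shows "c * \<bar>t - 2 * p\<bar> + p * (z - (t - 2 * p)) \<le> c * \<bar>z\<bar>"
proof -
  consider "\<bar>t\<bar> \<le> 2 * c" "p = t / 2" | "t > 2 * c" "p = c" | "t < - 2 * c" "p = - c"
    using assms unfolding p_def clip_def by (cases "\<bar>t\<bar> \<le> 2 * c"; cases "t > 0") auto
  then show ?thesis
  proof cases
    case 1
    have "p * z \<le> \<bar>p\<bar> * \<bar>z\<bar>"
      by (metis abs_ge_self abs_mult)
    also have "\<dots> \<le> c * \<bar>z\<bar>"
      using 1 by (intro mult_right_mono) auto
    finally have "p * z \<le> c * \<bar>z\<bar>" .
    moreover have "t - 2 * p = 0"
      using 1 by simp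
    ultimately show ?thesis
      by simp
  next
    case 2
    have "c * z \<le> c * \<bar>z\<bar>"
      using assms by (intro mult_left_mono) auto
    then show ?thesis
      using 2 by (simp add: algebra_simps)
  next
    case 3
    have "c * - z \<le> c * \<bar>z\<bar>"
      using assms by (intro mult_left_mono) auto
    then show ?thesis
      using 3 by (simp add: algebra_simps)
  qed
qed

definition prox_formula ::
    "real \<Rightarrow> real \<Rightarrow> nat \<Rightarrow> nat \<Rightarrow> (nat \<Rightarrow> nat \<Rightarrow> real) \<Rightarrow> nat \<Rightarrow> nat \<Rightarrow> real" where
  "prox_formula \<eta> \<beta> m1 m2 x k j =
     (if k \<in> Mset m1 m2 then x k j - clip (\<eta> * \<beta>) ((x k j - x (Suc k) j) / 2)
      else if k \<in> Suc ` Mset m1 m2 then x k j + clip (\<eta> * \<beta>) ((x (k - 1) j - x k j) / 2)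
      else x k j)"

lemma prox_formula_eq_0:
  assumes "\<eta> * \<beta> \<ge> 0" and "x (k - 1) j = 0" and "x k j = 0" and "x (Suc k) j = 0"
  shows "prox_formula \<eta> \<beta> m1 m2 x k j = 0"
  using assms clip_0 unfolding prox_formula_def by simp

lemma prox_formula_in_blockvec:
  assumes "\<eta> * \<beta> \<ge> 0" and "m1 \<ge> 1" and "m = 3 * m1 * m2" and x: "x \<in> blockvec m dbar"
  shows "prox_formula \<eta> \<beta> m1 m2 x \<in> blockvec m dbar"
  unfolding blockvec_def
proof (intro CollectI allI impI)
  fix k j
  assume kj: "k \<notin> {1..m} \<or> j \<notin> {1..dbar}"
  have x_zero: "x k' j' = 0" if "k' \<notin> {1..m} \<or> j' \<notin> {1..dbar}" for k' j'
    using x that unfolding blockvec_def by blast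
  show "prox_formula \<eta> \<beta> m1 m2 x k j = 0"
  proof (cases "j \<in> {1..dbar}")
    case True
    with kj have "k \<notin> Mset m1 m2 \<union> Suc ` Mset m1 m2"
      using Mset_pairs_subset[OF assms(2,3)] by blast
    with x_zero kj True show ?thesis
      unfolding prox_formula_def by auto
  next
    case False
    then show ?thesis
      using assms(1) x_zero by (intro prox_formula_eq_0) auto
  qed
qed

lemma abs_diff_subgradient_prox_pair:
  fixes \<eta> \<beta> x1 x2 y1 y2 :: real
  assumes "\<eta> > 0" and "\<beta> \<ge> 0"
  defines "p \<equiv> clip (\<eta> * \<beta>) ((x1 - x2) / 2)"
  shows "\<beta> * \<bar>(x1 - p) - (x2 + p)\<bar>
           + ((x1 - (x1 - p)) * (y1 - (x1 - p)) + (x2 - (x2 + p)) * (y2 - (x2 + p))) / \<eta>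
         \<le> \<beta> * \<bar>y1 - y2\<bar>"
proof -
  let ?t = "x1 - x2"
  have "\<eta> * \<beta> * \<bar>?t - 2 * p\<bar> + p * ((y1 - y2) - (?t - 2 * p)) \<le> \<eta> * \<beta> * \<bar>y1 - y2\<bar>"
    unfolding p_def using assms(1,2) by (intro abs_subgradient_clip) simp
  moreover have "(x1 - (x1 - p)) * (y1 - (x1 - p)) + (x2 - (x2 + p)) * (y2 - (x2 + p))
      = p * ((y1 - y2) - (?t - 2 * p))"
    by (simp add: algebra_simps)
  ultimately show ?thesis
    using assms(1) by (simp add: field_simps)
qed

lemma gfun_subgradient_prox_formula:
  fixes x y :: "nat \<Rightarrow> nat \<Rightarrow> real"
  assumes "\<eta> > 0" and "\<beta> \<ge> 0" and "m1 \<ge> 2" and "m = 3 * m1 * m2"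
  defines "s \<equiv> prox_formula \<eta> \<beta> m1 m2 x"
  shows "gfun \<beta> m1 m2 dbar s
           + (\<Sum>k\<in>{1..m}. \<Sum>j\<in>{1..dbar}. (x k j - s k j) * (y k j - s k j)) / \<eta>
         \<le> gfun \<beta> m1 m2 dbar y"
proof -
  let ?M = "Mset m1 m2"
  define D where "D k = (\<Sum>j\<in>{1..dbar}. (x k j - s k j) * (y k j - s k j))" for k
  have pair: "\<beta> * \<bar>s i j - s (Suc i) j\<bar>
      + ((x i j - s i j) * (y i j - s i j) + (x (Suc i) j - s (Suc i) j) * (y (Suc i) j - s (Suc i) j)) / \<eta>
      \<le> \<beta> * \<bar>y i j - y (Suc i) j\<bar>" if "i \<in> ?M" for i j
  proof -
    have "Suc i \<notin> ?M"
      using that Mset_Suc_disjoint[OF assms(3)] by blast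
    then show ?thesis
      using that assms(1,2) abs_diff_subgradient_prox_pair
      unfolding s_def prox_formula_def by simp
  qed
  have "(\<Sum>k\<in>{1..m}. D k) = (\<Sum>i\<in>?M. D i + D (Suc i))"
  proof (rule sum_Suc_pairs)
    show "?M \<union> Suc ` ?M \<subseteq> {1..m}"
      using assms(3,4) by (intro Mset_pairs_subset) auto
    show "D k = 0" if "k \<in> {1..m} - (?M \<union> Suc ` ?M)" for k
      using that unfolding D_def s_def prox_formula_def by simp
  qed (simp_all add: Mset_Suc_disjoint assms(3))
  then have "gfun \<beta> m1 m2 dbar s + (\<Sum>k\<in>{1..m}. D k) / \<eta>
      = (\<Sum>i\<in>?M. \<Sum>j\<in>{1..dbar}. \<beta> * \<bar>s i j - s (Suc i) j\<bar>
          + ((x i j - s i j) * (y i j - s i j) + (x (Suc i) j - s (Suc i) j) * (y (Suc i) j - s (Suc i) j)) / \<eta>)"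
    by (simp add: gfun_def D_def sum_distrib_left sum_divide_distrib sum.distrib add_divide_distrib)
  also have "\<dots> \<le> (\<Sum>i\<in>?M. \<Sum>j\<in>{1..dbar}. \<beta> * \<bar>y i j - y (Suc i) j\<bar>)"
    using pair by (intro sum_mono)
  also have "\<dots> = gfun \<beta> m1 m2 dbar y"
    by (simp add: gfun_def sum_distrib_left)
  finally show ?thesis
    unfolding D_def .
qed

lemma sqdist_three_point:
  "sqdist m dbar y x = sqdist m dbar z x + sqdist m dbar y z
     + 2 * (\<Sum>k\<in>{1..m}. \<Sum>j\<in>{1..dbar}. (z k j - x k j) * (y k j - z k j))"
proof -
  have "(y k j - x k j)\<^sup>2 = (z k j - x k j)\<^sup>2 + (y k j - z k j)\<^sup>2 + 2 * ((z k j - x k j) * (y k j - z k j))"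
    for k j
    by (simp add: power2_eq_square algebra_simps)
  then show ?thesis
    by (simp add: sqdist_def sum.distrib sum_distrib_left)
qed

lemma sqdist_nonneg: "sqdist m dbar y z \<ge> 0"
  unfolding sqdist_def by (intro sum_nonneg) auto

lemma sqdist_eq_0_iff:
  assumes "y \<in> blockvec m dbar" and "z \<in> blockvec m dbar"
  shows "sqdist m dbar y z = 0 \<longleftrightarrow> y = z"
proof
  assume "sqdist m dbar y z = 0"
  then have sq: "(y k j - z k j)\<^sup>2 = 0" if "k \<in> {1..m}" "j \<in> {1..dbar}" for k j
    using that unfolding sqdist_def
    by (simp add: sum_nonneg_eq_0_iff sum_nonneg)
  show "y = z"
  proof (intro ext)
    fix k j
    show "y k j = z k j"
    proof (cases "k \<in> {1..m} \<and> j \<in> {1..dbar}")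
      case True
      with sq show ?thesis
        by simp
    next
      case False
      with assms show ?thesis
        unfolding blockvec_def by auto
    qed
  qed
qed (simp add: sqdist_def)

lemma prox_formula_strongly_optimal:
  fixes x y :: "nat \<Rightarrow> nat \<Rightarrow> real" and dbar :: nat
  assumes "\<eta> > 0" and "\<beta> \<ge> 0" and "m1 \<ge> 2" and "m = 3 * m1 * m2"
  defines "s \<equiv> prox_formula \<eta> \<beta> m1 m2 x"
    and "F \<equiv> \<lambda>z. gfun \<beta> m1 m2 dbar z + 1 / (2 * \<eta>) * sqdist m dbar z x"
  shows "F s + sqdist m dbar y s / (2 * \<eta>) \<le> F y"
proof -
  let ?I = "\<Sum>k\<in>{1..m}. \<Sum>j\<in>{1..dbar}. (x k j - s k j) * (y k j - s k j)"
  let ?R = "1 / (2 * \<eta>) * sqdist m dbar s x + sqdist m dbar y s / (2 * \<eta>) - ?I / \<eta>"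
  have "(\<Sum>k\<in>{1..m}. \<Sum>j\<in>{1..dbar}. (s k j - x k j) * (y k j - s k j)) = - ?I"
    by (simp add: sum_negf[symmetric] algebra_simps)
  then have three_point: "sqdist m dbar y x = sqdist m dbar s x + sqdist m dbar y s - 2 * ?I"
    using sqdist_three_point[of m dbar y x s] by simp
  have halve: "1 / (2 * \<eta>) * (a + b - 2 * c) = 1 / (2 * \<eta>) * a + b / (2 * \<eta>) - c / \<eta>"
    for a b c :: real
    using assms(1) by (simp add: field_simps)
  have "F s + sqdist m dbar y s / (2 * \<eta>) = gfun \<beta> m1 m2 dbar s + ?I / \<eta> + ?R"
    unfolding F_def by simp
  also have "\<dots> \<le> gfun \<beta> m1 m2 dbar y + ?R"
    using gfun_subgradient_prox_formula[OF assms(1-4), where x = x and y = y and dbar = dbar]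
    unfolding s_def by (rule add_right_mono)
  also have "\<dots> = F y"
    unfolding F_def three_point halve ..
  finally show ?thesis .
qed

lemma arg_min_eq_strict_minimizer:
  fixes f :: "'a \<Rightarrow> 'b::order"
  assumes "P s" and "\<And>y. P y \<Longrightarrow> y \<noteq> s \<Longrightarrow> f s < f y"
  shows "arg_min f P = s"
  unfolding arg_min_def is_arg_min_def
proof (rule some_equality)
  show "P s \<and> \<not> (\<exists>y. P y \<and> f y < f s)"
    using assms by (metis order.asym)
next
  fix y
  assume "P y \<and> \<not> (\<exists>z. P z \<and> f z < f y)"
  then show "y = s"
    using assms by blast
qed

lemma prox_eq_prox_formula:
  assumes "\<eta> > 0" and "\<beta> \<ge> 0" and "m1 \<ge> 2" and "m = 3 * m1 * m2"
    and "x \<in> blockvec m dbar"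
  shows "prox \<eta> \<beta> m m1 m2 dbar x = prox_formula \<eta> \<beta> m1 m2 x"
  unfolding prox_def
proof (rule arg_min_eq_strict_minimizer)
  let ?s = "prox_formula \<eta> \<beta> m1 m2 x"
  show s: "?s \<in> blockvec m dbar"
    using assms by (intro prox_formula_in_blockvec) auto
  fix y
  assume y: "y \<in> blockvec m dbar" and "y \<noteq> ?s"
  then have "sqdist m dbar y ?s > 0"
    using sqdist_nonneg[of m dbar y ?s] sqdist_eq_0_iff[OF y s] by linarith
  then have "sqdist m dbar y ?s / (2 * \<eta>) > 0"
    using assms(1) by simp
  with prox_formula_strongly_optimal[OF assms(1-4), where x = x and y = y and dbar = dbar]
  show "gfun \<beta> m1 m2 dbar ?s + 1 / (2 * \<eta>) * sqdist m dbar ?s x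
      < gfun \<beta> m1 m2 dbar y + 1 / (2 * \<eta>) * sqdist m dbar y x"
    by linarith
qed

lemma Jmat_neq_0_cases: "Jmat p r c \<noteq> 0 \<Longrightarrow> c = r \<or> c = r + 1"
  unfolding Jmat_def by (auto split: if_splits)

lemma Aop_eq_0:
  assumes "x r j = 0" and "x (r + 1) j = 0"
  shows "Aop Lf m dbar x r j = 0"
  unfolding Aop_def Aent_def
  using assms Jmat_neq_0_cases[of m r] by (intro sum.neutral ballI) auto

lemma AtA_eq_0:
  assumes "x (c - 1) j = 0" and "x c j = 0" and "x (c + 1) j = 0"
  shows "AtA Lf m m1 m2 dbar x c j = 0"
proof -
  have "Aop Lf m dbar x r j = 0" if "Jmat m r c \<noteq> 0" for r
    using Jmat_neq_0_cases[OF that] assms by (auto intro: Aop_eq_0)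
  then show ?thesis
    unfolding AtA_def Aent_def by (intro sum.neutral ballI) auto
qed

theorem lemma8:
  fixes Lf \<beta> :: real and m1 m2 m dbar :: nat and x :: "nat \<Rightarrow> nat \<Rightarrow> real"
  assumes "Lf > 0" and "\<beta> > 0" and "m1 \<ge> 2" and "m2 \<ge> 1" and "even (m1 * m2)"
    and "m = 3 * m1 * m2" and "dbar \<ge> 5" and "odd dbar"
    and "x \<in> blockvec m dbar"
  shows "(\<forall>i\<in>{1..m}. supp (AtA Lf m m1 m2 dbar x i)
            \<subseteq> supp (x (i - 1)) \<union> supp (x i) \<union> supp (x (i + 1)))
      \<and> (\<forall>\<eta>>0. \<forall>i\<in>{1..m}. supp (prox \<eta> \<beta> m m1 m2 dbar x i)
            \<subseteq> supp (x (i - 1)) \<union> supp (x i) \<union> supp (x (i + 1)))"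
proof (intro conjI allI impI ballI)
  fix i
  show "supp (AtA Lf m m1 m2 dbar x i) \<subseteq> supp (x (i - 1)) \<union> supp (x i) \<union> supp (x (i + 1))"
    using AtA_eq_0[of x i] unfolding supp_def by blast
next
  fix \<eta> :: real and i
  assume "\<eta> > 0"
  then have "prox \<eta> \<beta> m m1 m2 dbar x = prox_formula \<eta> \<beta> m1 m2 x"
    and "\<eta> * \<beta> \<ge> 0"
    using assms(2,3,6,9) by (auto intro: prox_eq_prox_formula)
  then show "supp (prox \<eta> \<beta> m m1 m2 dbar x i) \<subseteq> supp (x (i - 1)) \<union> supp (x i) \<union> supp (x (i + 1))"
    using prox_formula_eq_0[of \<eta> \<beta> x i] unfolding supp_def by auto
qed

end
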